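(* Let $V$ be a finite nonempty set, $\hat x$ a maximally specific partial function on $P_V$, and $\sigma\colon X_V[\hat x]\to X_V$. Let $P_{01}[\sigma]=\{e\in P_V\mid \exists x\in X_V[\hat x]: x_e=0\wedge \sigma(x)_e=1\}$ and $P_{10}[\sigma]=\{e\in P_V\mid \exists x\in X_V[\hat x]: x_e=1\wedge \sigma(x)_e=0\}$. If there exist sets $P'_{01}\supseteq P_{01}[\sigma]$ and $P'_{10}\supseteq P_{10}[\sigma]$ with $P'_{10}\cap\hat x^{-1}(1)=\emptyset$ and $P'_{01}\cap\hat x^{-1}(0)=\emptyset$, then $\sigma(X_V[\hat x])\subseteq X_V[\hat x]$.
   Context: $P_V=\{pq\in V^2\mid p\neq q\}$; $X_V$ is the set of $x\in\{0,1\}^{P_V}$ with $x_{pq}+x_{qr}-x_{pr}\le 1$ for all pairwise distinct $p,q,r\in V$. A partial function $\tilde x$ is a map from $\operatorname{dom}(\tilde x)\subseteq P_V$ to $\{0,1\}$, $\tilde x^{-1}(b)$ the pairs mapped to $b$, and $X_V[\tilde x]=\{x\in X_V\mid x_{pq}=\tilde x_{pq}\ \forall pq\in\operatorname{dom}(\tilde x)\}$. A pair $pq$ is decided if $x_{pq}=x'_{pq}$ for all $x,x'\in X_V[\tilde x]$; $\tilde x$ is maximally specific if $X_V[\tilde x]\ne\emptyset$ and the decided pairs are exactly $\operatorname{dom}(\tilde x)$. *)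

theory Defs
  imports "HOL-Library.FuncSet"
begin

definition PV :: "'a set \<Rightarrow> ('a \<times> 'a) set" where
  "PV V = {(p, q). p \<in> V \<and> q \<in> V \<and> p \<noteq> q}"

definition XV :: "'a set \<Rightarrow> ('a \<times> 'a \<Rightarrow> int) set" where
  "XV V = {x \<in> PV V \<rightarrow>\<^sub>E {0, 1}.
     \<forall>p\<in>V. \<forall>q\<in>V. \<forall>r\<in>V. p \<noteq> q \<and> q \<noteq> r \<and> p \<noteq> r \<longrightarrow>
       x (p, q) + x (q, r) - x (p, r) \<le> 1}"

definition partial_fun :: "'a set \<Rightarrow> ('a \<times> 'a \<rightharpoonup> int) \<Rightarrow> bool" where
  "partial_fun V xt \<longleftrightarrow> dom xt \<subseteq> PV V \<and> ran xt \<subseteq> {0, 1}"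

definition preim :: "('a \<times> 'a \<rightharpoonup> int) \<Rightarrow> int \<Rightarrow> ('a \<times> 'a) set" where
  "preim xt b = {e. xt e = Some b}"

definition XVp :: "'a set \<Rightarrow> ('a \<times> 'a \<rightharpoonup> int) \<Rightarrow> ('a \<times> 'a \<Rightarrow> int) set" where
  "XVp V xt = {x \<in> XV V. \<forall>e\<in>dom xt. xt e = Some (x e)}"

definition decided :: "'a set \<Rightarrow> ('a \<times> 'a \<rightharpoonup> int) \<Rightarrow> 'a \<times> 'a \<Rightarrow> bool" where
  "decided V xt e \<longleftrightarrow> (\<forall>x\<in>XVp V xt. \<forall>x'\<in>XVp V xt. x e = x' e)"

definition maximally_specific :: "'a set \<Rightarrow> ('a \<times> 'a \<rightharpoonup> int) \<Rightarrow> bool" where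
  "maximally_specific V xt \<longleftrightarrow>
     XVp V xt \<noteq> {} \<and> {e \<in> PV V. decided V xt e} = dom xt"

definition P01 :: "'a set \<Rightarrow> ('a \<times> 'a \<rightharpoonup> int) \<Rightarrow> (('a \<times> 'a \<Rightarrow> int) \<Rightarrow> ('a \<times> 'a \<Rightarrow> int))
    \<Rightarrow> ('a \<times> 'a) set" where
  "P01 V xh \<sigma> = {e \<in> PV V. \<exists>x\<in>XVp V xh. x e = 0 \<and> \<sigma> x e = 1}"

definition P10 :: "'a set \<Rightarrow> ('a \<times> 'a \<rightharpoonup> int) \<Rightarrow> (('a \<times> 'a \<Rightarrow> int) \<Rightarrow> ('a \<times> 'a \<Rightarrow> int))
    \<Rightarrow> ('a \<times> 'a) set" where
  "P10 V xh \<sigma> = {e \<in> PV V. \<exists>x\<in>XVp V xh. x e = 1 \<and> \<sigma> x e = 0}"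

end

theory Submission
  imports Defs
begin

text \<open>A coordinate \<open>e\<close> decided by \<open>xh\<close> to \<open>b\<close> can only be flipped away from \<open>b\<close>, so
  the hypothesis forbids every flip on the domain of \<open>xh\<close>; hence \<open>\<sigma> x\<close> agrees with \<open>x\<close>,
  and therefore with \<open>xh\<close>, on that domain.\<close>

lemma XV_values:
  assumes "x \<in> XV V" and "e \<in> PV V"
  shows "x e = 0 \<or> x e = 1"
  using assms unfolding XV_def by auto

lemma XVp_preim:
  assumes "x \<in> XVp V xh" and "e \<in> preim xh b"
  shows "x e = b"
  using assms unfolding XVp_def preim_def by force

lemma dom_partial_fun:
  assumes "partial_fun V xh"
  shows "dom xh = preim xh 0 \<union> preim xh 1"
  using assms unfolding partial_fun_def preim_def by (auto simp: ran_def)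

lemma P01_disjoint_preim1: "P01 V xh \<sigma> \<inter> preim xh 1 = {}"
  unfolding P01_def by (auto dest: XVp_preim)

lemma P10_disjoint_preim0: "P10 V xh \<sigma> \<inter> preim xh 0 = {}"
  unfolding P10_def by (auto dest: XVp_preim)

lemma eq_if_not_flipped:
  assumes "x \<in> XVp V xh" and "\<sigma> x \<in> XV V" and "e \<in> PV V"
    and "e \<notin> P01 V xh \<sigma>" and "e \<notin> P10 V xh \<sigma>"
  shows "\<sigma> x e = x e"
proof -
  have "x \<in> XV V" using assms(1) unfolding XVp_def by simp
  then show ?thesis
    using assms XV_values[of x V e] XV_values[of "\<sigma> x" V e]
    unfolding P01_def P10_def by auto
qed

lemma image_XVp_subset_if_dom_not_flipped:
  assumes "partial_fun V xh"
    and "\<forall>x\<in>XVp V xh. \<sigma> x \<in> XV V"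
    and "dom xh \<inter> (P01 V xh \<sigma> \<union> P10 V xh \<sigma>) = {}"
  shows "\<sigma> ` XVp V xh \<subseteq> XVp V xh"
proof
  fix y assume "y \<in> \<sigma> ` XVp V xh"
  then obtain x where x: "x \<in> XVp V xh" and y: "y = \<sigma> x" by blast
  have "\<sigma> x e = x e" if "e \<in> dom xh" for e
  proof (rule eq_if_not_flipped[OF x])
    show "e \<in> PV V" using that assms(1) unfolding partial_fun_def by blast
  qed (use x assms(2,3) that in auto)
  with x have "\<forall>e\<in>dom xh. xh e = Some (\<sigma> x e)" unfolding XVp_def by auto
  with x y assms(2) show "y \<in> XVp V xh" unfolding XVp_def by blast
qed

theorem lemma5p7:
  fixes V :: "'a set"
    and xh :: "'a \<times> 'a \<rightharpoonup> int"
    and \<sigma> :: "('a \<times> 'a \<Rightarrow> int) \<Rightarrow> ('a \<times> 'a \<Rightarrow> int)"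
  assumes "finite V" and "V \<noteq> {}"
    and "partial_fun V xh"
    and "maximally_specific V xh"
    and "\<forall>x\<in>XVp V xh. \<sigma> x \<in> XV V"
    and "\<exists>P01' P10'. P01 V xh \<sigma> \<subseteq> P01' \<and> P10 V xh \<sigma> \<subseteq> P10' \<and>
           P10' \<inter> preim xh 1 = {} \<and> P01' \<inter> preim xh 0 = {}"
  shows "\<sigma> ` XVp V xh \<subseteq> XVp V xh"
proof (rule image_XVp_subset_if_dom_not_flipped[OF assms(3,5)])
  obtain A B where "P01 V xh \<sigma> \<subseteq> A" "P10 V xh \<sigma> \<subseteq> B"
    "B \<inter> preim xh 1 = {}" "A \<inter> preim xh 0 = {}"
    using assms(6) by blast
  then have "P01 V xh \<sigma> \<inter> preim xh 0 = {}" "P10 V xh \<sigma> \<inter> preim xh 1 = {}"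
    by blast+
  with P01_disjoint_preim1 P10_disjoint_preim0 dom_partial_fun[OF assms(3)]
  show "dom xh \<inter> (P01 V xh \<sigma> \<union> P10 V xh \<sigma>) = {}"
    by blast
qed

end
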